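(* Let $k \ge 3$ and let $G$ be a connected $k$-regular graph of order $n$ with $G \not\cong K_{k,k}$. Then $\gamma_{\rm gr}^t(G) \ge \frac{n}{k-1}$, and the inequality is strict if $k \ge 5$.
   Context: $N(v)$ denotes the open neighborhood of $v$. A sequence $S=(v_1,\ldots,v_k)$ of distinct vertices of a graph $G$ without isolated vertices is a legal sequence if $N(v_i)\setminus \bigcup_{j=1}^{i-1} N(v_j)\neq\emptyset$ for every $i\in\{2,\ldots,k\}$, and a total dominating sequence if moreover $\{v_1,\ldots,v_k\}$ is a total dominating set of $G$. $\gamma_{\rm gr}^t(G)$ is the maximum length of a total dominating sequence of $G$. *)

theory Defs
  imports Complex_Main
begin

definition simple_graph :: "'a set \<Rightarrow> ('a \<Rightarrow> 'a \<Rightarrow> bool) \<Rightarrow> bool" where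
  "simple_graph V E \<longleftrightarrow> finite V \<and> (\<forall>u v. E u v \<longrightarrow> u \<in> V \<and> v \<in> V)
     \<and> (\<forall>u v. E u v \<longrightarrow> E v u) \<and> (\<forall>v. \<not> E v v)"

definition nbhd :: "'a set \<Rightarrow> ('a \<Rightarrow> 'a \<Rightarrow> bool) \<Rightarrow> 'a \<Rightarrow> 'a set" where
  "nbhd V E v = {u \<in> V. E v u}"

definition regular :: "'a set \<Rightarrow> ('a \<Rightarrow> 'a \<Rightarrow> bool) \<Rightarrow> nat \<Rightarrow> bool" where
  "regular V E k \<longleftrightarrow> (\<forall>v\<in>V. card (nbhd V E v) = k)"

definition connected_graph :: "'a set \<Rightarrow> ('a \<Rightarrow> 'a \<Rightarrow> bool) \<Rightarrow> bool" where
  "connected_graph V E \<longleftrightarrow> V \<noteq> {} \<and>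
     (\<forall>u\<in>V. \<forall>v\<in>V. (u, v) \<in> {(x, y). E x y}\<^sup>*)"

definition graph_iso :: "'a set \<Rightarrow> ('a \<Rightarrow> 'a \<Rightarrow> bool) \<Rightarrow> 'b set \<Rightarrow> ('b \<Rightarrow> 'b \<Rightarrow> bool) \<Rightarrow> bool" where
  "graph_iso V E W F \<longleftrightarrow> (\<exists>f. bij_betw f V W \<and> (\<forall>u\<in>V. \<forall>v\<in>V. E u v \<longleftrightarrow> F (f u) (f v)))"

definition Kkk_verts :: "nat \<Rightarrow> nat set" where
  "Kkk_verts k = {0..<2*k}"

definition Kkk_edge :: "nat \<Rightarrow> nat \<Rightarrow> nat \<Rightarrow> bool" where
  "Kkk_edge k u v \<longleftrightarrow> u < 2*k \<and> v < 2*k \<and> ((u < k \<and> k \<le> v) \<or> (v < k \<and> k \<le> u))"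

definition legal_seq :: "'a set \<Rightarrow> ('a \<Rightarrow> 'a \<Rightarrow> bool) \<Rightarrow> 'a list \<Rightarrow> bool" where
  "legal_seq V E S \<longleftrightarrow> distinct S \<and> set S \<subseteq> V \<and>
     (\<forall>i. 1 \<le> i \<and> i < length S \<longrightarrow>
        nbhd V E (S ! i) - (\<Union>j<i. nbhd V E (S ! j)) \<noteq> {})"

definition total_dominating_set :: "'a set \<Rightarrow> ('a \<Rightarrow> 'a \<Rightarrow> bool) \<Rightarrow> 'a set \<Rightarrow> bool" where
  "total_dominating_set V E D \<longleftrightarrow> D \<subseteq> V \<and> (\<forall>v\<in>V. \<exists>u\<in>D. E v u)"

definition total_dominating_seq :: "'a set \<Rightarrow> ('a \<Rightarrow> 'a \<Rightarrow> bool) \<Rightarrow> 'a list \<Rightarrow> bool" where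
  "total_dominating_seq V E S \<longleftrightarrow> legal_seq V E S \<and> total_dominating_set V E (set S)"

definition gamma_gr_t :: "'a set \<Rightarrow> ('a \<Rightarrow> 'a \<Rightarrow> bool) \<Rightarrow> nat" where
  "gamma_gr_t V E = Max {length S | S. total_dominating_seq V E S}"

end

theory Submission
  imports Defs
begin

(* Call Z \<subseteq> V closed if every open neighbourhood meeting Z lies inside Z. A closed set is a
   disjoint union of minimal closed sets, and a total dominating sequence is built one minimal
   closed set R at a time, so that every vertex added dominates new vertices of R only.
   Inside R the sequence grows greedily by a vertex whose neighbourhood contains as few
   undominated vertices of R as possible. While R is partly dominated, its undominated part is
   not closed, so some neighbourhood sticks out of it and the greedy vertex adds at most k - 1
   new vertices; at the last step the undominated remainder consists of twins. The surplus comes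
   from the start in R: either one vertex, dominating k new vertices, or, when twin classes are
   large, two neighbours u, u' of a vertex z with N(u) \<noteq> N(u'), both of whose neighbourhoods
   contain the twin class of z; such u, u' exist unless G is K_{k,k}. Counting shows that R
   needs at least (|R| + b) / (k - 1) vertices whenever 2b + 3 \<le> k; b = 0 and b = 1 give
   the two claims. *)

lemma graph_iso_Kkk:
  assumes "finite B" "finite Q" "card B = k" "card Q = k" "B \<inter> Q = {}"
    and edges: "\<forall>x\<in>B \<union> Q. \<forall>y\<in>B \<union> Q. E x y \<longleftrightarrow> (x \<in> B \<longleftrightarrow> y \<in> Q)"
  shows "graph_iso (B \<union> Q) E (Kkk_verts k) (Kkk_edge k)"
proof -
  obtain g where g: "bij_betw g B {0..<k}" using ex_bij_betw_finite_nat assms(1,3) by blast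
  obtain h where h: "bij_betw h Q {0..<k}" using ex_bij_betw_finite_nat assms(2,4) by blast
  define f where "f x = (if x \<in> B then g x else k + h x)" for x
  have fB: "bij_betw f B {0..<k}"
    using g by (rule bij_betw_cong[THEN iffD1, rotated]) (simp add: f_def)
  have "bij_betw (\<lambda>x. k + h x) Q {k..<2*k}"
  proof -
    have "bij_betw (\<lambda>n. k + n) {0..<k} {k..<2*k}"
      by (rule bij_betw_byWitness[of _ "\<lambda>n. n - k"]) (auto simp: image_def intro!: exI[of _ "_ - k"])
    from bij_betw_trans[OF h this] show ?thesis by (simp add: comp_def)
  qed
  then have fQ: "bij_betw f Q {k..<2*k}"
    by (rule bij_betw_cong[THEN iffD1, rotated]) (use assms(5) in \<open>auto simp: f_def\<close>)
  have f: "bij_betw f (B \<union> Q) (Kkk_verts k)"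
    using bij_betw_combine[OF fB fQ] by (simp add: Kkk_verts_def ivl_disj_un_two(3))
  have "f x \<in> {0..<k}" if "x \<in> B" for x
    using that fB by (auto simp: bij_betw_def)
  moreover have "f x \<in> {k..<2*k}" if "x \<in> Q" for x
    using that fQ by (auto simp: bij_betw_def)
  ultimately have side: "f x < k \<longleftrightarrow> x \<in> B" "f x < 2 * k" if "x \<in> B \<union> Q" for x
    using that by fastforce+
  have "E x y \<longleftrightarrow> Kkk_edge k (f x) (f y)" if "x \<in> B \<union> Q" "y \<in> B \<union> Q" for x y
    using side[OF that(1)] side[OF that(2)] edges that assms(5)
    unfolding Kkk_edge_def by auto
  with f show ?thesis
    unfolding graph_iso_def by blast
qed

lemma length_le_gamma_gr_t:
  assumes "finite V" "total_dominating_seq V E S"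
  shows "length S \<le> gamma_gr_t V E"
proof -
  have "length T \<le> card V" if "total_dominating_seq V E T" for T
  proof -
    have "distinct T" "set T \<subseteq> V"
      using that by (auto simp: total_dominating_seq_def legal_seq_def)
    then show ?thesis
      using card_mono[OF assms(1)] distinct_card by metis
  qed
  then have "{length S | S. total_dominating_seq V E S} \<subseteq> {..card V}"
    by blast
  then have "finite {length S | S. total_dominating_seq V E S}"
    using finite_subset by blast
  then show ?thesis
    unfolding gamma_gr_t_def using assms(2) by (auto intro!: Max_ge)
qed

locale regular_graph =
  fixes V :: "'a set" and E :: "'a \<Rightarrow> 'a \<Rightarrow> bool" and k :: nat
  assumes simple: "simple_graph V E" and regular: "regular V E k" and degree_pos: "0 < k"
begin

abbreviation N :: "'a \<Rightarrow> 'a set" where "N v \<equiv> nbhd V E v"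

definition dominated :: "'a list \<Rightarrow> 'a set" where
  "dominated S = (\<Union>v\<in>set S. N v)"

definition nbhd_closed :: "'a set \<Rightarrow> bool" where
  "nbhd_closed Z \<longleftrightarrow> Z \<subseteq> V \<and> (\<forall>v. N v \<inter> Z \<noteq> {} \<longrightarrow> N v \<subseteq> Z)"

definition minimal_closed :: "'a set \<Rightarrow> bool" where
  "minimal_closed R \<longleftrightarrow> nbhd_closed R \<and> R \<noteq> {} \<and>
     (\<forall>Z. nbhd_closed Z \<longrightarrow> Z \<subseteq> R \<longrightarrow> Z = {} \<or> Z = R)"

definition twins :: "'a \<Rightarrow> 'a set" where
  "twins z = {w \<in> V. N w = N z}"

lemma finite_V: "finite V"
  using simple by (simp add: simple_graph_def)

lemma edge_sym: "E u v \<Longrightarrow> E v u"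
  using simple by (simp add: simple_graph_def)

lemma in_nbhd_iff: "u \<in> N v \<longleftrightarrow> E v u"
  using simple by (auto simp: nbhd_def simple_graph_def)

lemma in_nbhd_sym: "u \<in> N v \<longleftrightarrow> v \<in> N u"
  using in_nbhd_iff edge_sym by blast

lemma not_in_own_nbhd: "v \<notin> N v"
  using simple by (simp add: nbhd_def simple_graph_def)

lemma nbhd_subset: "N v \<subseteq> V"
  by (auto simp: nbhd_def)

lemma finite_nbhd: "finite (N v)"
  using nbhd_subset finite_V finite_subset by blast

lemma card_nbhd: "v \<in> V \<Longrightarrow> card (N v) = k"
  using regular by (simp add: regular_def)

lemma nbhd_nonempty: "v \<in> V \<Longrightarrow> N v \<noteq> {}"
  using card_nbhd degree_pos by fastforce

lemma vertex_if_nbhd_nonempty: "N v \<noteq> {} \<Longrightarrow> v \<in> V"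
  using simple by (auto simp: nbhd_def simple_graph_def)

lemma nbhd_eq_if_subset: "u \<in> V \<Longrightarrow> w \<in> V \<Longrightarrow> N u \<subseteq> N w \<Longrightarrow> N u = N w"
  by (metis card_nbhd card_subset_eq finite_nbhd)

lemma finite_twins: "finite (twins z)"
  using finite_V by (simp add: twins_def)

lemma twins_if_covering:
  assumes "A \<subseteq> V" "\<forall>y. N y \<inter> A \<noteq> {} \<longrightarrow> A \<subseteq> N y" "a \<in> A"
  shows "A \<subseteq> twins a"
proof
  fix w assume w: "w \<in> A"
  have "N a \<subseteq> N w"
    using assms(2,3) w in_nbhd_sym by blast
  then show "w \<in> twins a"
    using nbhd_eq_if_subset assms(1,3) w by (auto simp: twins_def)
qed

lemma dominated_append: "dominated (S @ T) = dominated S \<union> dominated T"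
  by (auto simp: dominated_def)

lemma dominated_Cons: "dominated (v # T) = N v \<union> dominated T"
  by (auto simp: dominated_def)

lemma dominated_Nil: "dominated [] = {}"
  by (simp add: dominated_def)

lemma legal_snoc:
  assumes S: "legal_seq V E S" and "v \<in> V" and new: "N v - dominated S \<noteq> {}"
  shows "legal_seq V E (S @ [v])"
  unfolding legal_seq_def
proof (intro conjI allI impI)
  have "v \<notin> set S"
    using new by (auto simp: dominated_def)
  then show "distinct (S @ [v])" "set (S @ [v]) \<subseteq> V"
    using S \<open>v \<in> V\<close> by (auto simp: legal_seq_def)
  fix i assume i: "1 \<le> i \<and> i < length (S @ [v])"
  show "N ((S @ [v]) ! i) - (\<Union>j<i. N ((S @ [v]) ! j)) \<noteq> {}"
  proof (cases "i < length S")
    case True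
    then have "(\<Union>j<i. N ((S @ [v]) ! j)) = (\<Union>j<i. N (S ! j))"
      by (auto simp: nth_append)
    then show ?thesis
      using True S i by (auto simp: legal_seq_def nth_append)
  next
    case False
    then have "i = length S"
      using i by simp
    then have "(\<Union>j<i. N ((S @ [v]) ! j)) = (\<Union>j<length S. N (S ! j))"
      by (auto simp: nth_append)
    also have "\<dots> = dominated S"
      by (auto simp: dominated_def in_set_conv_nth) (use nth_mem in blast)
    finally show ?thesis
      using \<open>i = length S\<close> new by (simp add: nth_append)
  qed
qed

lemma nbhd_closed_Diff: "nbhd_closed A \<Longrightarrow> nbhd_closed B \<Longrightarrow> nbhd_closed (A - B)"
  unfolding nbhd_closed_def by blast

lemma nbhd_closed_V: "nbhd_closed V"
  using nbhd_subset by (auto simp: nbhd_closed_def)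

lemma nbhd_subset_closed: "nbhd_closed R \<Longrightarrow> N v \<inter> R \<noteq> {} \<Longrightarrow> N v \<subseteq> R"
  by (simp add: nbhd_closed_def)

lemma exists_minimal_closed_subset:
  assumes "nbhd_closed R" "R \<noteq> {}"
  shows "\<exists>M\<subseteq>R. minimal_closed M"
proof -
  obtain M where M: "nbhd_closed M \<and> M \<noteq> {} \<and> M \<subseteq> R"
    and least: "\<And>Z. nbhd_closed Z \<and> Z \<noteq> {} \<and> Z \<subseteq> R \<Longrightarrow> card M \<le> card Z"
    using ex_has_least_nat[of "\<lambda>Z. nbhd_closed Z \<and> Z \<noteq> {} \<and> Z \<subseteq> R" R card] assms by blast
  have "Z = M" if "nbhd_closed Z" "Z \<subseteq> M" "Z \<noteq> {}" for Z
    using least[of Z] that M card_seteq[of M Z] finite_V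
    by (metis nbhd_closed_def order_trans rev_finite_subset)
  with M show ?thesis
    unfolding minimal_closed_def by blast
qed

lemma minimal_closed_facts:
  assumes "minimal_closed R"
  shows "nbhd_closed R" "R \<subseteq> V" "finite R" "R \<noteq> {}"
  using assms finite_subset[OF _ finite_V] by (auto simp: minimal_closed_def nbhd_closed_def)

lemma exists_greedy_vertex:
  assumes "A \<subseteq> V" "\<not> nbhd_closed A"
  shows "\<exists>v. N v \<inter> A \<noteq> {} \<and> card (N v \<inter> A) < k \<and>
           (A \<subseteq> N v \<longrightarrow> (\<forall>y. N y \<inter> A \<noteq> {} \<longrightarrow> A \<subseteq> N y))"
proof -
  obtain v0 where v0: "N v0 \<inter> A \<noteq> {}" "\<not> N v0 \<subseteq> A"
    using assms unfolding nbhd_closed_def by blast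
  have "card (N v0 \<inter> A) < card (N v0)"
    using v0(2) finite_nbhd by (intro psubset_card_mono) auto
  then have small0: "card (N v0 \<inter> A) < k"
    using card_nbhd vertex_if_nbhd_nonempty v0(1) by fastforce
  obtain v where v: "N v \<inter> A \<noteq> {}"
    and least: "\<And>y. N y \<inter> A \<noteq> {} \<Longrightarrow> card (N v \<inter> A) \<le> card (N y \<inter> A)"
    using ex_has_least_nat[of "\<lambda>y. N y \<inter> A \<noteq> {}" v0 "\<lambda>y. card (N y \<inter> A)"] v0(1) by blast
  have "A \<subseteq> N y" if "A \<subseteq> N v" "N y \<inter> A \<noteq> {}" for y
  proof -
    have "card A \<le> card (N y \<inter> A)"
      using least[OF that(2)] that(1) by (simp add: Int_absorb1)
    then have "N y \<inter> A = A"
      using finite_subset[OF assms(1) finite_V] by (intro card_seteq) auto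
    then show ?thesis by blast
  qed
  with v least[OF v0(1)] small0 show ?thesis
    by (meson le_less_trans)
qed

lemma greedy_extension:
  assumes "legal_seq V E S" "minimal_closed R" "R \<inter> dominated S \<noteq> {}" "R - dominated S \<noteq> {}"
    and twins_bound: "\<forall>z\<in>R. card (twins z) \<le> c"
  shows "\<exists>T. legal_seq V E (S @ T) \<and> dominated (S @ T) = dominated S \<union> R \<and>
             card (R - dominated S) + (k - 1) \<le> (k - 1) * length T + c"
  using assms(1,3,4)
proof (induction "card (R - dominated S)" arbitrary: S rule: less_induct)
  case less
  define A where "A = R - dominated S"
  note R = minimal_closed_facts[OF assms(2)]
  have A: "A \<subseteq> V" "finite A"
    using R(2,3) A_def by auto
  have "\<not> nbhd_closed A"
    using assms(2) less.prems(2,3) unfolding minimal_closed_def A_def by blast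
  then obtain v where v: "N v \<inter> A \<noteq> {}" "card (N v \<inter> A) < k"
    and covering: "A \<subseteq> N v \<Longrightarrow> \<forall>y. N y \<inter> A \<noteq> {} \<longrightarrow> A \<subseteq> N y"
    using exists_greedy_vertex[OF A(1)] by blast
  have "N v \<subseteq> R"
    using nbhd_subset_closed[OF R(1)] v(1) A_def by blast
  then have dom_v: "dominated (S @ [v]) = dominated S \<union> (N v \<inter> A)"
    by (auto simp: dominated_append dominated_Cons dominated_Nil A_def)
  have "N v - dominated S \<noteq> {}"
    using v(1) unfolding A_def by blast
  then have legal_v: "legal_seq V E (S @ [v])"
    using legal_snoc[OF less.prems(1) vertex_if_nbhd_nonempty] by blast
  show ?case
  proof (cases "A \<subseteq> N v")
    case True
    obtain a where a: "a \<in> A"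
      using less.prems(3) A_def by blast
    have "A \<subseteq> twins a"
      using twins_if_covering[OF A(1) covering[OF True] a] .
    then have "card A \<le> card (twins a)"
      by (rule card_mono[OF finite_twins])
    also have "\<dots> \<le> c"
      using twins_bound a A_def by blast
    finally have "card A \<le> c" .
    with True legal_v dom_v show ?thesis
      by (intro exI[of _ "[v]"]) (auto simp: A_def)
  next
    case False
    have A_split: "card A = card (A \<inter> N v) + card (A - N v)"
      using card_Int_Diff[OF A(2)] .
    have A': "R - dominated (S @ [v]) = A - N v"
      using dom_v A_def by blast
    have "card (R - dominated (S @ [v])) < card (R - dominated S)"
      using A_split A' A_def v(1) finite_nbhd by (simp add: Int_commute card_gt_0_iff)
    moreover have "R \<inter> dominated (S @ [v]) \<noteq> {}"
      using less.prems(2) dom_v by blast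
    moreover have "R - dominated (S @ [v]) \<noteq> {}"
      using A' False by blast
    ultimately obtain T where T: "legal_seq V E ((S @ [v]) @ T)"
        "dominated ((S @ [v]) @ T) = dominated (S @ [v]) \<union> R"
        "card (R - dominated (S @ [v])) + (k - 1) \<le> (k - 1) * length T + c"
      using less.hyps[OF _ legal_v] by blast
    show ?thesis
    proof (intro exI conjI)
      show "legal_seq V E (S @ v # T)" "dominated (S @ v # T) = dominated S \<union> R"
        using T(1,2) dom_v A_def by auto
      show "card (R - dominated S) + (k - 1) \<le> (k - 1) * length (v # T) + c"
        using T(3) A' A_split v(2) A_def by (simp add: Int_commute)
    qed
  qed
qed

lemma extension_via_vertex:
  assumes S: "legal_seq V E S" and R: "minimal_closed R" "R \<inter> dominated S = {}"
    and z: "z \<in> R" and twins_bound: "\<forall>y\<in>R. card (twins y) \<le> c" and "c + 2 + b \<le> k"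
  shows "\<exists>T. legal_seq V E (S @ T) \<and> dominated (S @ T) = dominated S \<union> R \<and>
             card R + b \<le> (k - 1) * length T"
proof -
  note R' = minimal_closed_facts[OF R(1)]
  obtain x where x: "x \<in> N z"
    using nbhd_nonempty z R'(2) by blast
  have "x \<in> V"
    using x nbhd_subset by blast
  have Nx: "N x \<subseteq> R"
    using nbhd_subset_closed[OF R'(1)] x z in_nbhd_sym by blast
  have dom_x: "dominated (S @ [x]) = dominated S \<union> N x"
    by (simp add: dominated_append dominated_Cons dominated_Nil)
  have legal_x: "legal_seq V E (S @ [x])"
    using legal_snoc[OF S \<open>x \<in> V\<close>] nbhd_nonempty[OF \<open>x \<in> V\<close>] Nx R(2) by blast
  have card_R: "card R = card (R - N x) + k"
    using card_Diff_subset[OF finite_nbhd Nx] card_mono[OF R'(3) Nx] card_nbhd[OF \<open>x \<in> V\<close>]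
    by simp
  have "R \<noteq> N x"
  proof
    assume R_eq: "R = N x"
    have "R \<subseteq> N y" if "N y \<inter> R \<noteq> {}" for y
    proof -
      have "N y \<subseteq> N x"
        using nbhd_subset_closed[OF R'(1) that] R_eq by simp
      then show ?thesis
        using nbhd_eq_if_subset[OF vertex_if_nbhd_nonempty \<open>x \<in> V\<close>] that R_eq by blast
    qed
    then have "R \<subseteq> twins z"
      using twins_if_covering[OF R'(2) _ z] by blast
    then have "card R \<le> c"
      using card_mono[OF finite_twins] twins_bound z by (meson order_trans)
    with card_R \<open>c + 2 + b \<le> k\<close> show False
      by simp
  qed
  have R_new: "R - dominated (S @ [x]) = R - N x"
    using dom_x R(2) by blast
  have "R \<inter> dominated (S @ [x]) \<noteq> {}"
    using dom_x Nx nbhd_nonempty[OF \<open>x \<in> V\<close>] by blast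
  moreover have "R - dominated (S @ [x]) \<noteq> {}"
    using R_new Nx \<open>R \<noteq> N x\<close> by blast
  ultimately obtain T where T: "legal_seq V E ((S @ [x]) @ T)"
      "dominated ((S @ [x]) @ T) = dominated (S @ [x]) \<union> R"
      "card (R - N x) + (k - 1) \<le> (k - 1) * length T + c"
    using greedy_extension[OF legal_x R(1) _ _ twins_bound] R_new by auto
  show ?thesis
  proof (intro exI conjI)
    show "legal_seq V E (S @ x # T)" "dominated (S @ x # T) = dominated S \<union> R"
      using T(1,2) dom_x Nx by auto
    show "card R + b \<le> (k - 1) * length (x # T)"
      using T(3) card_R \<open>c + 2 + b \<le> k\<close> by simp
  qed
qed

lemma extension_via_pair:
  assumes S: "legal_seq V E S" and R: "minimal_closed R" "R \<inter> dominated S = {}"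
    and z: "z \<in> R" and u: "u \<in> N z" "u' \<in> N z" "N u \<noteq> N u'"
    and twins_bound: "\<forall>y\<in>R. card (twins y) \<le> card (twins z)"
    and "2 + b \<le> card (twins z)" "b + 3 \<le> k"
  shows "\<exists>T. legal_seq V E (S @ T) \<and> dominated (S @ T) = dominated S \<union> R \<and>
             card R + b \<le> (k - 1) * length T"
proof -
  note R' = minimal_closed_facts[OF R(1)]
  define c where "c = card (twins z)"
  define U where "U = N u \<union> N u'"
  have uV: "u \<in> V" "u' \<in> V"
    using u nbhd_subset by blast+
  have NuR: "N u \<subseteq> R" "N u' \<subseteq> R"
    using nbhd_subset_closed[OF R'(1)] u(1,2) z in_nbhd_sym by blast+
  have "twins z \<subseteq> N u \<inter> N u'"
    using u(1,2) in_nbhd_sym unfolding twins_def by auto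
  then have "c \<le> card (N u \<inter> N u')"
    unfolding c_def by (intro card_mono) (simp_all add: finite_nbhd)
  then have card_U: "card U + c \<le> 2 * k"
    using card_Un_Int[OF finite_nbhd finite_nbhd, of u u'] card_nbhd uV unfolding U_def by simp
  have dom_uu: "dominated (S @ [u, u']) = dominated S \<union> U"
    by (auto simp: dominated_append dominated_Cons dominated_Nil U_def)
  have legal_u: "legal_seq V E (S @ [u])"
    using legal_snoc[OF S uV(1)] nbhd_nonempty[OF uV(1)] NuR(1) R(2) by blast
  have "\<not> N u' \<subseteq> N u"
    using nbhd_eq_if_subset[OF uV(2,1)] u(3) by metis
  then have "N u' - dominated (S @ [u]) \<noteq> {}"
    using NuR(2) R(2) by (auto simp: dominated_append dominated_Cons dominated_Nil)
  then have legal_uu: "legal_seq V E (S @ [u, u'])"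
    using legal_snoc[OF legal_u uV(2)] by simp
  have UR: "U \<subseteq> R"
    using NuR unfolding U_def by blast
  have card_R: "card R = card (R - U) + card U"
    using card_Diff_subset[OF _ UR] card_mono[OF R'(3) UR] finite_subset[OF UR R'(3)] by simp
  have R_new: "R - dominated (S @ [u, u']) = R - U"
    using dom_uu R(2) by blast
  show ?thesis
  proof (cases "R = U")
    case True
    with legal_uu dom_uu card_U \<open>2 + b \<le> card (twins z)\<close> show ?thesis
      by (intro exI[of _ "[u, u']"]) (auto simp: c_def)
  next
    case False
    have "R \<inter> dominated (S @ [u, u']) \<noteq> {}"
      using dom_uu UR nbhd_nonempty[OF uV(1)] unfolding U_def by blast
    moreover have "R - dominated (S @ [u, u']) \<noteq> {}"
      using R_new UR False by blast
    ultimately obtain T where T: "legal_seq V E ((S @ [u, u']) @ T)"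
        "dominated ((S @ [u, u']) @ T) = dominated (S @ [u, u']) \<union> R"
        "card (R - U) + (k - 1) \<le> (k - 1) * length T + c"
      using greedy_extension[OF legal_uu R(1) _ _ twins_bound] R_new unfolding c_def by auto
    show ?thesis
    proof (intro exI conjI)
      show "legal_seq V E (S @ u # u' # T)" "dominated (S @ u # u' # T) = dominated S \<union> R"
        using T(1,2) dom_uu UR by auto
      show "card R + b \<le> (k - 1) * length (u # u' # T)"
        using T(3) card_R card_U \<open>b + 3 \<le> k\<close> by simp
    qed
  qed
qed

lemma extension_minimal_closed:
  assumes non_twin_neighbours: "\<And>z. z \<in> V \<Longrightarrow> \<exists>u\<in>N z. \<exists>u'\<in>N z. N u \<noteq> N u'"
    and "2 * b + 3 \<le> k" and S: "legal_seq V E S" and R: "minimal_closed R" "R \<inter> dominated S = {}"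
  shows "\<exists>T. legal_seq V E (S @ T) \<and> dominated (S @ T) = dominated S \<union> R \<and>
             card R + b \<le> (k - 1) * length T"
proof -
  note R' = minimal_closed_facts[OF R(1)]
  obtain z where z: "z \<in> R" and z_max: "\<forall>y\<in>R. card (twins y) \<le> card (twins z)"
  proof -
    have "Max ((\<lambda>y. card (twins y)) ` R) \<in> (\<lambda>y. card (twins y)) ` R"
      using R'(3,4) by (intro Max_in) simp_all
    then obtain z where "z \<in> R" "card (twins z) = Max ((\<lambda>y. card (twins y)) ` R)"
      by force
    with R'(3) show ?thesis
      using that by simp
  qed
  show ?thesis
  proof (cases "2 + b \<le> card (twins z)")
    case True
    obtain u u' where "u \<in> N z" "u' \<in> N z" "N u \<noteq> N u'"
      using non_twin_neighbours z R'(2) by blast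
    with extension_via_pair[OF S R z _ _ _ z_max True] \<open>2 * b + 3 \<le> k\<close> show ?thesis
      by simp
  next
    case False
    then show ?thesis
      using extension_via_vertex[OF S R z z_max] \<open>2 * b + 3 \<le> k\<close> by simp
  qed
qed

lemma extension_closed:
  assumes non_twin_neighbours: "\<And>z. z \<in> V \<Longrightarrow> \<exists>u\<in>N z. \<exists>u'\<in>N z. N u \<noteq> N u'"
    and "2 * b + 3 \<le> k"
  shows "legal_seq V E S \<Longrightarrow> nbhd_closed R \<Longrightarrow> R \<noteq> {} \<Longrightarrow> R \<inter> dominated S = {} \<Longrightarrow>
    \<exists>T. legal_seq V E (S @ T) \<and> dominated (S @ T) = dominated S \<union> R \<and>
        card R + b \<le> (k - 1) * length T"
proof (induction "card R" arbitrary: R S rule: less_induct)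
  case less
  have finite_R: "finite R"
    using less.prems(2) finite_subset[OF _ finite_V] by (simp add: nbhd_closed_def)
  obtain M where "M \<subseteq> R" and M: "minimal_closed M"
    using exists_minimal_closed_subset[OF less.prems(2,3)] by blast
  then obtain T1 where T1: "legal_seq V E (S @ T1)" "dominated (S @ T1) = dominated S \<union> M"
      "card M + b \<le> (k - 1) * length T1"
    using extension_minimal_closed[OF non_twin_neighbours \<open>2 * b + 3 \<le> k\<close> less.prems(1)]
      less.prems(4) by blast
  have card_R: "card R = card M + card (R - M)"
    using card_Diff_subset[OF _ \<open>M \<subseteq> R\<close>] card_mono[OF finite_R \<open>M \<subseteq> R\<close>]
      finite_subset[OF \<open>M \<subseteq> R\<close> finite_R] by simp
  show ?case
  proof (cases "R - M = {}")
    case True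
    with T1 \<open>M \<subseteq> R\<close> card_R show ?thesis
      by (intro exI[of _ T1]) (simp add: Diff_eq_empty_iff subset_antisym)
  next
    case False
    have "card (R - M) < card R"
      using card_R minimal_closed_facts[OF M] by (simp add: card_gt_0_iff)
    moreover have "nbhd_closed (R - M)"
      using nbhd_closed_Diff less.prems(2) M by (simp add: minimal_closed_def)
    moreover have "(R - M) \<inter> dominated (S @ T1) = {}"
      using T1(2) less.prems(4) by blast
    ultimately obtain T2 where T2: "legal_seq V E ((S @ T1) @ T2)"
        "dominated ((S @ T1) @ T2) = dominated (S @ T1) \<union> (R - M)"
        "card (R - M) + b \<le> (k - 1) * length T2"
      using less.hyps[OF _ T1(1)] False by blast
    show ?thesis
    proof (intro exI conjI)
      show "legal_seq V E (S @ T1 @ T2)" "dominated (S @ T1 @ T2) = dominated S \<union> R"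
        using T1(2) T2(1,2) \<open>M \<subseteq> R\<close> by auto
      show "card R + b \<le> (k - 1) * length (T1 @ T2)"
        using T1(3) T2(3) card_R by (simp add: distrib_left)
    qed
  qed
qed

lemma total_dominating_seq_if_dominated:
  assumes "legal_seq V E T" "dominated T = V"
  shows "total_dominating_seq V E T"
  unfolding total_dominating_seq_def total_dominating_set_def
proof (intro conjI ballI)
  show "legal_seq V E T" "set T \<subseteq> V"
    using assms(1) by (simp_all add: legal_seq_def)
  fix v assume "v \<in> V"
  then obtain u where "u \<in> set T" "v \<in> N u"
    using assms(2) by (auto simp: dominated_def)
  then show "\<exists>u\<in>set T. E v u"
    using in_nbhd_iff edge_sym by blast
qed

lemma gamma_gr_t_lower_bound:
  assumes non_twin_neighbours: "\<And>z. z \<in> V \<Longrightarrow> \<exists>u\<in>N z. \<exists>u'\<in>N z. N u \<noteq> N u'"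
    and "2 * b + 3 \<le> k" and "V \<noteq> {}"
  shows "card V + b \<le> (k - 1) * gamma_gr_t V E"
proof -
  obtain T where T: "legal_seq V E T" "dominated T = V" "card V + b \<le> (k - 1) * length T"
    using extension_closed[OF non_twin_neighbours \<open>2 * b + 3 \<le> k\<close> _ nbhd_closed_V, of "[]"]
      \<open>V \<noteq> {}\<close> by (auto simp: legal_seq_def dominated_Nil)
  then have "length T \<le> gamma_gr_t V E"
    using length_le_gamma_gr_t[OF finite_V total_dominating_seq_if_dominated] by blast
  with T(3) show ?thesis
    using mult_le_mono2 order_trans by blast
qed

lemma graph_iso_Kkk_if_neighbours_twins:
  assumes conn: "connected_graph V E" and z: "z \<in> V"
    and twin_nbhd: "\<forall>u\<in>N z. \<forall>u'\<in>N z. N u = N u'"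
  shows "graph_iso V E (Kkk_verts k) (Kkk_edge k)"
proof -
  define Q where "Q = N z"
  obtain u0 where u0: "u0 \<in> Q"
    using nbhd_nonempty z Q_def by blast
  define B where "B = N u0"
  have N_Q: "N u = B" if "u \<in> Q" for u
    using twin_nbhd u0 that unfolding Q_def B_def by blast
  have "u0 \<in> V" "z \<in> B"
    using u0 nbhd_subset in_nbhd_sym unfolding Q_def B_def by blast+
  have N_B: "N b = Q" if "b \<in> B" for b
  proof -
    have "Q \<subseteq> N b"
      using N_Q that in_nbhd_sym by blast
    then show ?thesis
      using nbhd_eq_if_subset[OF z] that nbhd_subset unfolding Q_def B_def by blast
  qed
  have disjoint: "B \<inter> Q = {}"
    using N_Q not_in_own_nbhd by blast
  have "V \<subseteq> B \<union> Q"
  proof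
    fix v assume "v \<in> V"
    then have "(z, v) \<in> {(x, y). E x y}\<^sup>*"
      using conn z by (simp add: connected_graph_def)
    then show "v \<in> B \<union> Q"
    proof (induction rule: rtrancl_induct)
      case base
      show ?case using \<open>z \<in> B\<close> by blast
    next
      case (step y w)
      then have "w \<in> N y"
        using in_nbhd_iff by simp
      with step.IH show ?case
        using N_B N_Q by blast
    qed
  qed
  then have V: "V = B \<union> Q"
    using nbhd_subset unfolding Q_def B_def by blast
  have "E x y \<longleftrightarrow> (x \<in> B \<longleftrightarrow> y \<in> Q)" if "x \<in> B \<union> Q" "y \<in> B \<union> Q" for x y
    using that N_B[of x] N_Q[of x] disjoint in_nbhd_iff[of y x] by blast
  moreover have "card B = k" "card Q = k"
    using card_nbhd \<open>u0 \<in> V\<close> z unfolding Q_def B_def by simp_all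
  ultimately show ?thesis
    using graph_iso_Kkk[of B Q k E] finite_nbhd disjoint V
    unfolding Q_def B_def by simp
qed

end

theorem mainTheorem14:
  fixes V :: "'a set" and E :: "'a \<Rightarrow> 'a \<Rightarrow> bool" and k :: nat
  assumes "simple_graph V E"
    and "k \<ge> 3"
    and "regular V E k"
    and "connected_graph V E"
    and "\<not> graph_iso V E (Kkk_verts k) (Kkk_edge k)"
  shows "real (gamma_gr_t V E) \<ge> real (card V) / (real k - 1) \<and>
         (k \<ge> 5 \<longrightarrow> real (gamma_gr_t V E) > real (card V) / (real k - 1))"
proof -
  interpret regular_graph V E k
    using assms(1-3) by unfold_locales simp_all
  have non_twin_neighbours: "\<exists>u\<in>N z. \<exists>u'\<in>N z. N u \<noteq> N u'" if "z \<in> V" for z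
    using graph_iso_Kkk_if_neighbours_twins[OF assms(4) that] assms(5) by blast
  have "V \<noteq> {}"
    using assms(4) by (simp add: connected_graph_def)
  have "card V + b \<le> (k - 1) * gamma_gr_t V E" if "2 * b + 3 \<le> k" for b
    using gamma_gr_t_lower_bound[OF _ that \<open>V \<noteq> {}\<close>] non_twin_neighbours by blast
  moreover have "real (k - 1) = real k - 1"
    using assms(2) by simp
  ultimately have bound: "real (card V) + b \<le> real (gamma_gr_t V E) * (real k - 1)"
    if "2 * b + 3 \<le> k" for b
    using that by (metis mult.commute of_nat_add of_nat_le_iff of_nat_mult)
  have "real k - 1 > 0"
    using assms(2) by simp
  with bound[of 0] bound[of 1] assms(2) show ?thesis
    by (auto simp: divide_le_eq divide_less_eq)
qed

end
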